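(* Let $p$ be an odd prime. Then $$\Psi^w_{\mathbb{Z}_{2p}}(x)=\left[\frac{2}{p-1}\sum_{d\mid\frac{p-1}{2}}\phi\!\left(\frac{p-1}{2d}\right)\left(1+x^{\frac{p-1}{d}}\right)^{d}\left(\left(1+x^{\frac{p-1}{d}}\right)^{d}(1+x)-1\right)\right]-x,$$ and hence $$\mathcal{E}^w(\mathbb{Z}_{2p})=\Psi^w_{\mathbb{Z}_{2p}}(1)=-1+\frac{2}{p-1}\sum_{d\mid\frac{p-1}{2}}\phi\!\left(\frac{p-1}{2d}\right)2^d\left(2^{d+1}-1\right).$$
   Context: $\phi$ is Euler's totient function. For a finite group $\mathcal{A}$ with identity $e$, let $G(\mathcal{A})=\{\Omega\subseteq\mathcal{A}:\Omega^{-1}=\Omega,\ \langle\Omega\rangle=\mathcal{A},\ e\notin\Omega\}$. $\mathrm{Aut}(\mathcal{A})$ acts on $G(\mathcal{A})$ by $\alpha\cdot\Omega=\alpha(\Omega)$. For $k\ge1$ let $a^w_k(\mathcal{A})$ be the number of orbits of $\mathrm{Aut}(\mathcal{A})$ on $\{\Omega\in G(\mathcal{A}):|\Omega|=k\}$ (the number of weak equivalence classes of Cayley graphs $C(\mathcal{A},\Omega)$ of degree $k$); $\Psi^w_{\mathcal{A}}(x)=\sum_{k=1}^{|\mathcal{A}|-1}a^w_k(\mathcal{A})x^k$ and $\mathcal{E}^w(\mathcal{A})=\Psi^w_{\mathcal{A}}(1)$. *)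

theory Defs
  imports "HOL-Algebra.Elementary_Groups" "HOL-Algebra.Generated_Groups"
    "HOL-Number_Theory.Number_Theory" Complex_Main
begin

definition cayley_sets :: "('a, 'b) monoid_scheme \<Rightarrow> 'a set set" where
  "cayley_sets G = {\<Omega>. \<Omega> \<subseteq> carrier G \<and> m_inv G ` \<Omega> = \<Omega> \<and>
                          generate G \<Omega> = carrier G \<and> \<one>\<^bsub>G\<^esub> \<notin> \<Omega>}"

definition aut_orbit :: "('a, 'b) monoid_scheme \<Rightarrow> 'a set \<Rightarrow> 'a set set" where
  "aut_orbit G \<Omega> = (\<lambda>\<alpha>. \<alpha> ` \<Omega>) ` iso G G"

definition a_w :: "('a, 'b) monoid_scheme \<Rightarrow> nat \<Rightarrow> nat" where
  "a_w G k = card (aut_orbit G ` {\<Omega> \<in> cayley_sets G. card \<Omega> = k})"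

definition Psi_w :: "('a, 'b) monoid_scheme \<Rightarrow> real \<Rightarrow> real" where
  "Psi_w G x = (\<Sum>k = 1..card (carrier G) - 1. real (a_w G k) * x ^ k)"

definition E_w :: "('a, 'b) monoid_scheme \<Rightarrow> real" where
  "E_w G = Psi_w G 1"

end

theory Submission
  imports Defs
begin

text \<open>
  The automorphisms of \<open>\<int>\<^sub>2\<^sub>p\<close> are the multiplications by units. Fix a primitive root \<open>g\<close>
  modulo \<open>p\<close>, put \<open>m = (p - 1) / 2\<close> and let \<open>hlog x\<close> be the discrete logarithm of \<open>x\<close> reduced
  modulo \<open>m\<close>; since \<open>g\<^sup>m \<equiv> -1\<close>, it takes the same value on \<open>x\<close> and \<open>-x\<close>. An inverse-closed
  subset of \<open>\<int>\<^sub>2\<^sub>p - {0}\<close> is then encoded by a triple \<open>(e, A, B)\<close>: whether it contains \<open>p\<close>,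
  and the values of \<open>hlog\<close> on its even and on its odd elements prime to \<open>p\<close>. The set has
  \<open>e + 2|A| + 2|B|\<close> elements, it generates iff \<open>B \<noteq> {}\<close> or \<open>e \<and> A \<noteq> {}\<close>, and multiplication
  by a unit \<open>u\<close> rotates \<open>A\<close> and \<open>B\<close> by \<open>hlog u\<close> in \<open>\<int>/m\<close>, every rotation being realised.
  So the weak equivalence classes are the orbits of the rotation action of \<open>\<int>/m\<close> on triples,
  counted by Burnside's lemma: the subsets fixed by the rotation \<open>j\<close> are those of period
  \<open>gcd j m\<close>, and grouping the rotations by \<open>d = gcd j m\<close> brings in \<open>totient (m div d)\<close>.
\<close>

section \<open>Burnside's lemma for cyclic actions\<close>

lemma mod_add_mod_add_complement:
  fixes i k m j :: nat
  assumes "i + k = m"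
  shows "((j + i) mod m + k) mod m = j mod m"
proof -
  have "((j + i) mod m + k) mod m = (j + m) mod m"
    using assms by (simp add: mod_add_left_eq add.assoc)
  then show ?thesis by simp
qed

locale cyclic_action =
  fixes m :: nat and X :: "'x set" and act :: "nat \<Rightarrow> 'x \<Rightarrow> 'x"
  assumes order_pos: "0 < m"
    and act_0: "t \<in> X \<Longrightarrow> act 0 t = t"
    and act_act: "t \<in> X \<Longrightarrow> act i (act j t) = act ((i + j) mod m) t"
    and act_closed: "t \<in> X \<Longrightarrow> act j t \<in> X"
begin

definition orbit :: "'x \<Rightarrow> 'x set" where
  "orbit t = (\<lambda>j. act j t) ` {..<m}"

definition stabilizer :: "'x \<Rightarrow> nat set" where
  "stabilizer t = {j \<in> {..<m}. act j t = t}"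

lemma act_inverse: "t \<in> X \<Longrightarrow> i \<le> m \<Longrightarrow> act (m - i) (act i t) = t"
  using act_act[of t "m - i" i] act_0 by simp

lemma orbit_refl: "t \<in> X \<Longrightarrow> t \<in> orbit t"
  unfolding orbit_def using order_pos act_0 by (auto intro!: image_eqI[of _ _ 0])

lemma finite_orbit: "finite (orbit t)"
  unfolding orbit_def by simp

lemma card_orbit_pos: "t \<in> X \<Longrightarrow> 0 < card (orbit t)"
  using orbit_refl finite_orbit card_gt_0_iff by blast

lemma orbit_subset: "t \<in> X \<Longrightarrow> orbit t \<subseteq> X"
  unfolding orbit_def using act_closed by auto

lemma orbit_eq:
  assumes t: "t \<in> X" and s: "s \<in> orbit t"
  shows "orbit s = orbit t"
proof -
  obtain i where i: "i < m" "s = act i t"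
    using s unfolding orbit_def by auto
  have "act k t = act ((k + (m - i)) mod m) s" if "k < m" for k
    using that i act_act[OF t] by (simp add: mod_add_left_eq)
  then have "orbit t \<subseteq> orbit s"
    unfolding orbit_def using order_pos by auto
  moreover have "orbit s \<subseteq> orbit t"
    unfolding orbit_def using i act_act[OF t] order_pos by auto
  ultimately show ?thesis by blast
qed

theorem card_orbit_mult_card_stabilizer:
  assumes t: "t \<in> X"
  shows "card (orbit t) * card (stabilizer t) = m"
proof -
  have fibre: "card {j \<in> {..<m}. act j t = act i t} = card (stabilizer t)" if "i < m" for i
  proof (rule sym, rule bij_betw_same_card,
         rule bij_betw_byWitness[where f = "\<lambda>j. (j + i) mod m" and f' = "\<lambda>j. (j + (m - i)) mod m"])
    show "\<forall>j \<in> stabilizer t. ((j + i) mod m + (m - i)) mod m = j"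
      using that mod_add_mod_add_complement[of i "m - i" m] by (auto simp: stabilizer_def)
    show "\<forall>j \<in> {j \<in> {..<m}. act j t = act i t}. ((j + (m - i)) mod m + i) mod m = j"
      using that mod_add_mod_add_complement[of "m - i" i m] by auto
    show "(\<lambda>j. (j + i) mod m) ` stabilizer t \<subseteq> {j \<in> {..<m}. act j t = act i t}"
      using act_act[OF t, of i] order_pos by (auto simp: stabilizer_def) (metis add.commute)
    show "(\<lambda>j. (j + (m - i)) mod m) ` {j \<in> {..<m}. act j t = act i t} \<subseteq> stabilizer t"
    proof (clarsimp simp: stabilizer_def)
      fix j assume "act j t = act i t"
      then have "act (m - i) (act j t) = t"
        using act_inverse[OF t] that by simp
      then show "act ((j + (m - i)) mod m) t = t"
        using act_act[OF t, of "m - i" j] by (simp add: add.commute)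
    qed
  qed
  have "m = (\<Sum>y \<in> orbit t. card {j \<in> {..<m}. act j t = y})"
    using sum.group[of "{..<m}" "orbit t" "\<lambda>j. act j t" "\<lambda>_. 1::nat"]
    unfolding orbit_def by simp
  also have "\<dots> = (\<Sum>y \<in> orbit t. card (stabilizer t))"
    using fibre by (intro sum.cong) (auto simp: orbit_def)
  finally show ?thesis by simp
qed

lemma card_orbits_eq_sum:
  assumes "Y \<subseteq> X" "finite Y" "\<And>t. t \<in> Y \<Longrightarrow> orbit t \<subseteq> Y"
  shows "real (card (orbit ` Y)) = (\<Sum>t \<in> Y. 1 / real (card (orbit t)))"
proof -
  have "(\<Sum>t \<in> Y. 1 / real (card (orbit t))) =
        (\<Sum>C \<in> orbit ` Y. \<Sum>t \<in> {t \<in> Y. orbit t = C}. 1 / real (card (orbit t)))"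
    using sum.group[of Y "orbit ` Y" orbit "\<lambda>t. 1 / real (card (orbit t))"] assms by simp
  also have "\<dots> = (\<Sum>C \<in> orbit ` Y. 1)"
  proof (rule sum.cong[OF refl])
    fix C assume "C \<in> orbit ` Y"
    then obtain t0 where t0: "t0 \<in> Y" "C = orbit t0" by auto
    have C: "{t \<in> Y. orbit t = C} = C"
      using t0 assms orbit_eq orbit_refl by blast
    have "(\<Sum>t \<in> {t \<in> Y. orbit t = C}. 1 / real (card (orbit t))) = (\<Sum>t \<in> C. 1 / real (card C))"
      by (rule sum.cong[OF C]) (metis (mono_tags, lifting) C mem_Collect_eq)
    then show "(\<Sum>t \<in> {t \<in> Y. orbit t = C}. 1 / real (card (orbit t))) = 1"
      using card_orbit_pos[of t0] t0 assms(1) by auto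
  qed
  finally show ?thesis by simp
qed

theorem weighted_burnside:
  assumes "Y \<subseteq> X" "finite Y"
  shows "(\<Sum>t \<in> Y. w t / real (card (orbit t))) =
         (\<Sum>j<m. \<Sum>t \<in> {t \<in> Y. act j t = t}. w t) / real m"
proof -
  have "(\<Sum>t \<in> Y. w t / real (card (orbit t))) = (\<Sum>t \<in> Y. w t * real (card (stabilizer t))) / real m"
    unfolding sum_divide_distrib
  proof (rule sum.cong[OF refl])
    fix t assume "t \<in> Y"
    then have "real (card (orbit t)) * real (card (stabilizer t)) = real m" "0 < card (orbit t)"
      using card_orbit_mult_card_stabilizer card_orbit_pos assms(1) by (metis of_nat_mult subsetD)+
    then show "w t / real (card (orbit t)) = w t * real (card (stabilizer t)) / real m"
      using order_pos by (auto simp: field_simps)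
  qed
  also have "(\<Sum>t \<in> Y. w t * real (card (stabilizer t))) = (\<Sum>t \<in> Y. \<Sum>j \<in> stabilizer t. w t)"
    by (simp add: mult.commute)
  also have "\<dots> = (\<Sum>j<m. \<Sum>t \<in> {t \<in> Y. act j t = t}. w t)"
    unfolding stabilizer_def by (rule sum.swap_restrict) (use assms in auto)
  finally show ?thesis .
qed

end

section \<open>Rotation-invariant subsets of \<open>\<int>/m\<close>\<close>

definition rotate_set :: "nat \<Rightarrow> nat \<Rightarrow> nat set \<Rightarrow> nat set" where
  "rotate_set m j A = (\<lambda>a. (a + j) mod m) ` A"

lemma rotate_set_rotate_set: "rotate_set m i (rotate_set m j A) = rotate_set m ((i + j) mod m) A"
proof -
  have "((a + j) mod m + i) mod m = (a + (i + j) mod m) mod m" for a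
    by (simp add: mod_add_left_eq mod_add_right_eq ac_simps)
  then show ?thesis unfolding rotate_set_def image_image by simp
qed

lemma rotate_set_0: "A \<subseteq> {..<m} \<Longrightarrow> rotate_set m 0 A = A"
  unfolding rotate_set_def by (auto simp: subset_iff image_iff)

lemma rotate_set_subset: "0 < m \<Longrightarrow> rotate_set m j A \<subseteq> {..<m}"
  unfolding rotate_set_def by auto

lemma rotate_set_empty_iff [simp]: "rotate_set m j A = {} \<longleftrightarrow> A = {}"
  unfolding rotate_set_def by simp

lemma mem_rotate_set: "a \<in> A \<Longrightarrow> (a + j) mod m \<in> rotate_set m j A"
  unfolding rotate_set_def by auto

lemma card_rotate_set: "A \<subseteq> {..<m} \<Longrightarrow> card (rotate_set m j A) = card A"
proof -
  assume A: "A \<subseteq> {..<m}"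
  have "inj_on (\<lambda>a. (a + j) mod m) A"
  proof (rule inj_onI)
    fix a b assume "a \<in> A" "b \<in> A" "(a + j) mod m = (b + j) mod m"
    then show "a = b"
      using A by (metis cong_add_rcancel_nat cong_def lessThan_iff mod_less subsetD)
  qed
  then show ?thesis unfolding rotate_set_def by (rule card_image)
qed

lemma mem_rotate_set_iterate:
  assumes "rotate_set m s A = A" "a \<in> A"
  shows "(a + k * s) mod m \<in> A"
proof (induction k)
  case 0
  then show ?case
    using assms rotate_set_subset[of m s A] by (cases "m = 0") (auto simp: rotate_set_def)
next
  case (Suc k)
  then have "((a + k * s) mod m + s) mod m \<in> A"
    using mem_rotate_set assms(1) by metis
  moreover have "((a + k * s) mod m + s) mod m = (a + k * s + s) mod m"
    by (rule mod_add_left_eq)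
  ultimately show ?case by (simp add: algebra_simps)
qed

lemma rotate_set_fixed_gcd:
  assumes "0 < m" "A \<subseteq> {..<m}" "rotate_set m j A = A"
  shows "rotate_set m (gcd j m) A = A"
proof (cases "j = 0")
  case True
  then show ?thesis using assms by (simp add: rotate_set_def)
next
  case False
  obtain x y where "j * x = m * y + gcd j m"
    using bezout_nat[OF False] by blast
  then have "(x * j) mod m = gcd j m mod m"
    by (simp add: mult.commute)
  then have "(a + gcd j m) mod m = (a + x * j) mod m" for a
    by (metis mod_add_right_eq mod_mod_trivial)
  then have "rotate_set m (gcd j m) A \<subseteq> A"
    using mem_rotate_set_iterate[OF assms(3)] unfolding rotate_set_def by auto
  moreover have "finite A" using assms(2) finite_subset by blast
  ultimately show ?thesis
    using card_rotate_set[OF assms(2)] card_subset_eq by blast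
qed

lemma rotate_set_fixed_iff_periodic:
  assumes m: "0 < m" and A: "A \<subseteq> {..<m}"
  shows "rotate_set m j A = A \<longleftrightarrow> (\<forall>a<m. a \<in> A \<longleftrightarrow> a mod gcd j m \<in> A)"
proof -
  define d where "d = gcd j m"
  have d: "0 < d" "d dvd m" "d dvd j" using m by (simp_all add: d_def)
  show ?thesis unfolding d_def[symmetric]
  proof
    assume "rotate_set m j A = A"
    then have fixed: "rotate_set m d A = A"
      unfolding d_def using rotate_set_fixed_gcd m A by blast
    show "\<forall>a<m. a \<in> A \<longleftrightarrow> a mod d \<in> A"
    proof (intro allI impI)
      fix a assume a: "a < m"
      have "a mod d < m" using a mod_less_eq_dividend[of a d] by linarith
      moreover have "a + (m div d - a div d) * d = a mod d + m"
      proof -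
        have "(m div d - a div d) * d = m - a div d * d" using d by (simp add: diff_mult_distrib)
        moreover have "a = a div d * d + a mod d" by simp
        moreover have "a div d * d \<le> a" by (rule div_times_less_eq_dividend)
        ultimately show ?thesis using a by linarith
      qed
      ultimately have "(a + (m div d - a div d) * d) mod m = a mod d" by simp
      moreover have "(a mod d + (a div d) * d) mod m = a" using a by simp
      ultimately show "a \<in> A \<longleftrightarrow> a mod d \<in> A"
        using mem_rotate_set_iterate[OF fixed] by metis
    qed
  next
    assume periodic: "\<forall>a<m. a \<in> A \<longleftrightarrow> a mod d \<in> A"
    have "(a + j) mod m mod d = a mod d" for a
      using d by (auto simp: mod_mod_cancel elim!: dvdE)
    then have "rotate_set m j A \<subseteq> A"
      using periodic A m unfolding rotate_set_def by (auto simp: subset_iff)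
    moreover have "finite A" using A finite_subset by blast
    ultimately show "rotate_set m j A = A"
      using card_rotate_set[OF A] card_subset_eq by blast
  qed
qed

lemma sum_Pow_power_card:
  fixes y :: "'a::comm_semiring_1"
  assumes "finite S"
  shows "(\<Sum>A \<in> Pow S. y ^ card A) = (1 + y) ^ card S"
  using assms
proof (induction S rule: finite_induct)
  case empty
  then show ?case by simp
next
  case (insert a S)
  have "(\<Sum>B \<in> Pow S. y ^ card (insert a B)) = y * (\<Sum>B \<in> Pow S. y ^ card B)"
    unfolding sum_distrib_left
    by (rule sum.cong) (use insert in \<open>auto simp: finite_subset card_insert_if\<close>)
  moreover have "inj_on (insert a) (Pow S)" "Pow S \<inter> insert a ` Pow S = {}"
    using insert by (auto intro!: inj_onI)
  ultimately have "(\<Sum>A \<in> Pow (insert a S). y ^ card A) = (1 + y) * (\<Sum>B \<in> Pow S. y ^ card B)"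
    using insert by (simp add: Pow_insert sum.union_disjoint sum.reindex algebra_simps)
  then show ?case using insert by simp
qed

lemma card_periodic_extension:
  assumes "0 < d" "d dvd m" "B \<subseteq> {..<d}"
  shows "card {a \<in> {..<m}. a mod d \<in> B} = m div d * card B"
proof -
  have "{a \<in> {..<m}. a mod d \<in> B} = (\<lambda>(q, r). q * d + r) ` ({..<m div d} \<times> B)"
  proof (intro equalityI subsetI)
    fix a assume "a \<in> {a \<in> {..<m}. a mod d \<in> B}"
    moreover have "a div d < m div d" if "a < m"
      using that assms by (simp add: div_less_iff_less_mult)
    ultimately show "a \<in> (\<lambda>(q, r). q * d + r) ` ({..<m div d} \<times> B)"
      by (auto intro!: image_eqI[of _ _ "(a div d, a mod d)"])
  next
    fix a assume "a \<in> (\<lambda>(q, r). q * d + r) ` ({..<m div d} \<times> B)"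
    then obtain q r where qr: "q < m div d" "r \<in> B" "a = q * d + r" by auto
    have "r < d" using qr assms by auto
    have "q * d + r < (q + 1) * d" using \<open>r < d\<close> by simp
    also have "\<dots> \<le> m div d * d" using qr by (intro mult_le_mono1) simp
    also have "\<dots> = m" using assms by simp
    finally show "a \<in> {a \<in> {..<m}. a mod d \<in> B}" using qr \<open>r < d\<close> by simp
  qed
  moreover have "inj_on (\<lambda>(q, r). q * d + r) ({..<m div d} \<times> B)"
  proof (rule inj_onI, clarify)
    fix q r q' r' assume "r \<in> B" "r' \<in> B" and eq: "q * d + r = q' * d + r'"
    then have "r < d" "r' < d" using assms by auto
    moreover have "(q * d + r) mod d = (q' * d + r') mod d" "(q * d + r) div d = (q' * d + r') div d"
      using eq by simp_all
    ultimately show "q = q' \<and> r = r'" using assms(1) by simp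
  qed
  ultimately show ?thesis using assms
    by (simp add: card_image card_cartesian_product finite_subset)
qed

definition rotation_fixed_sets :: "nat \<Rightarrow> nat \<Rightarrow> nat set set" where
  "rotation_fixed_sets m j = {A \<in> Pow {..<m}. rotate_set m j A = A}"

text \<open>A set of period \<open>d\<close> is determined by its trace on \<open>{..<d}\<close>.\<close>

lemma sum_rotation_fixed_sets:
  fixes y :: "'a::comm_semiring_1"
  assumes m: "0 < m"
  shows "(\<Sum>A \<in> rotation_fixed_sets m j. y ^ card A) = (1 + y ^ (m div gcd j m)) ^ gcd j m"
proof -
  define d where "d = gcd j m"
  have d: "0 < d" "d dvd m" "d \<le> m" using m by (simp_all add: d_def dvd_imp_le)
  have fixed_iff: "A \<in> rotation_fixed_sets m j \<longleftrightarrow> A \<subseteq> {..<m} \<and> (\<forall>a<m. a \<in> A \<longleftrightarrow> a mod d \<in> A)" for A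
    using rotate_set_fixed_iff_periodic[OF m, of A j] unfolding rotation_fixed_sets_def d_def by auto
  define extend where "extend B = {a \<in> {..<m}. a mod d \<in> B}" for B
  have "bij_betw extend (Pow {..<d}) (rotation_fixed_sets m j)"
  proof (rule bij_betw_byWitness[where f' = "\<lambda>A. A \<inter> {..<d}"])
    show "\<forall>B \<in> Pow {..<d}. extend B \<inter> {..<d} = B"
      unfolding extend_def using d by auto
    show "\<forall>A \<in> rotation_fixed_sets m j. extend (A \<inter> {..<d}) = A"
      using d by (auto simp: extend_def fixed_iff) (meson lessThan_iff subsetD)
    show "extend ` Pow {..<d} \<subseteq> rotation_fixed_sets m j"
      by (auto simp: extend_def fixed_iff) (meson le_less_trans mod_less_eq_dividend)
  qed auto
  then have "(\<Sum>A \<in> rotation_fixed_sets m j. y ^ card A) = (\<Sum>B \<in> Pow {..<d}. y ^ card (extend B))"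
    by (simp add: sum.reindex_bij_betw[symmetric])
  also have "\<dots> = (\<Sum>B \<in> Pow {..<d}. (y ^ (m div d)) ^ card B)"
  proof (rule sum.cong[OF refl])
    fix B assume "B \<in> Pow {..<d}"
    then have "card (extend B) = m div d * card B"
      unfolding extend_def using card_periodic_extension[OF d(1,2)] by simp
    then show "y ^ card (extend B) = (y ^ (m div d)) ^ card B"
      by (simp add: power_mult)
  qed
  also have "\<dots> = (1 + y ^ (m div d)) ^ d"
    by (simp add: sum_Pow_power_card)
  finally show ?thesis by (simp add: d_def)
qed

section \<open>Orbits of triples\<close>

type_synonym triple = "bool \<times> nat set \<times> nat set"

definition triples :: "nat \<Rightarrow> triple set" where
  "triples m = UNIV \<times> Pow {..<m} \<times> Pow {..<m}"

fun rotate_triple :: "nat \<Rightarrow> nat \<Rightarrow> triple \<Rightarrow> triple" where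
  "rotate_triple m j (e, A, B) = (e, rotate_set m j A, rotate_set m j B)"

fun triple_weight :: "triple \<Rightarrow> nat" where
  "triple_weight (e, A, B) = of_bool e + 2 * card A + 2 * card B"

fun generating_triple :: "triple \<Rightarrow> bool" where
  "generating_triple (e, A, B) \<longleftrightarrow> B \<noteq> {} \<or> e \<and> A \<noteq> {}"

lemma finite_triples: "finite (triples m)"
  unfolding triples_def by simp

lemma cyclic_action_rotate_triple: "0 < m \<Longrightarrow> cyclic_action m (triples m) (rotate_triple m)"
  by unfold_locales (auto simp: triples_def rotate_set_0 rotate_set_rotate_set rotate_set_subset)

lemma triple_weight_rotate_triple:
  "t \<in> triples m \<Longrightarrow> triple_weight (rotate_triple m j t) = triple_weight t"
  by (cases t) (auto simp: triples_def card_rotate_set)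

lemma generating_triple_rotate_triple:
  "generating_triple (rotate_triple m j t) = generating_triple t"
  by (cases t) auto

lemma triple_weight_bounds:
  assumes "t \<in> triples m" "generating_triple t"
  shows "1 \<le> triple_weight t" "triple_weight t \<le> 4 * m + 1"
proof -
  obtain e A B where t: "t = (e, A, B)" "A \<subseteq> {..<m}" "B \<subseteq> {..<m}"
    using assms(1) by (cases t) (auto simp: triples_def)
  then have "finite A" "finite B" "card A \<le> m" "card B \<le> m"
    by (auto intro: finite_subset dest: card_mono[rotated])
  then show "1 \<le> triple_weight t" "triple_weight t \<le> 4 * m + 1"
    using assms(2) t by (auto simp: Suc_le_eq)
qed

lemma sum_triple_weight_product:
  fixes x :: "'a::comm_semiring_1"
  shows "(\<Sum>t \<in> UNIV \<times> R \<times> R. x ^ triple_weight t) = (1 + x) * (\<Sum>A \<in> R. (x\<^sup>2) ^ card A)\<^sup>2"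
proof -
  define F where "F = (\<Sum>A \<in> R. (x\<^sup>2) ^ card A)"
  have weight: "x ^ triple_weight (e, A, B) = x ^ of_bool e * ((x\<^sup>2) ^ card A * (x\<^sup>2) ^ card B)" for e A B
    by (simp add: power_add power_mult mult.assoc)
  have "(\<Sum>t \<in> UNIV \<times> R \<times> R. x ^ triple_weight t) = (\<Sum>e \<in> UNIV. \<Sum>A \<in> R. \<Sum>B \<in> R. x ^ triple_weight (e, A, B))"
    unfolding sum.cartesian_product by (rule sum.cong) auto
  also have "\<dots> = (\<Sum>e \<in> UNIV. x ^ of_bool e * (F * F))"
  proof (rule sum.cong[OF refl])
    fix e :: bool
    have "F * F = (\<Sum>A \<in> R. \<Sum>B \<in> R. (x\<^sup>2) ^ card A * (x\<^sup>2) ^ card B)"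
      unfolding F_def by (rule sum_product)
    then show "(\<Sum>A \<in> R. \<Sum>B \<in> R. x ^ triple_weight (e, A, B)) = x ^ of_bool e * (F * F)"
      by (simp only: weight sum_distrib_left)
  qed
  also have "\<dots> = (1 + x) * F\<^sup>2"
    by (simp add: UNIV_bool power2_eq_square algebra_simps)
  finally show ?thesis
    unfolding F_def .
qed

lemma sum_triple_weight_non_generating:
  fixes x :: "'a::comm_semiring_1"
  assumes "finite R" "{} \<in> R"
  shows "(\<Sum>t \<in> {t \<in> UNIV \<times> R \<times> R. \<not> generating_triple t}. x ^ triple_weight t) = x + (\<Sum>A \<in> R. (x\<^sup>2) ^ card A)"
proof -
  have "{t \<in> UNIV \<times> R \<times> R. \<not> generating_triple t} = insert (True, {}, {}) ((\<lambda>A. (False, A, {})) ` R)"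
    using assms(2) by auto
  then have "(\<Sum>t \<in> {t \<in> UNIV \<times> R \<times> R. \<not> generating_triple t}. x ^ triple_weight t)
        = x ^ triple_weight (True, {}, {}) + (\<Sum>t \<in> (\<lambda>A. (False, A, {})) ` R. x ^ triple_weight t)"
    using assms(1) by (simp add: sum.insert_if image_iff)
  also have "(\<Sum>t \<in> (\<lambda>A. (False, A, {})) ` R. x ^ triple_weight t) = (\<Sum>A \<in> R. x ^ triple_weight (False, A, {}))"
    by (rule sum.reindex_cong[where l = "\<lambda>A. (False, A, {})"]) (auto intro: inj_onI)
  finally show ?thesis
    by (simp add: power_mult)
qed

lemma sum_fixed_generating_triples:
  fixes x :: "'a::comm_ring_1" and m j :: nat
  defines "F \<equiv> (\<Sum>A \<in> rotation_fixed_sets m j. (x\<^sup>2) ^ card A)"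
  shows "(\<Sum>t \<in> {t \<in> triples m. generating_triple t \<and> rotate_triple m j t = t}. x ^ triple_weight t)
           = (1 + x) * F\<^sup>2 - F - x"
proof -
  define R where "R = rotation_fixed_sets m j"
  have R: "finite R" "{} \<in> R"
    unfolding R_def rotation_fixed_sets_def rotate_set_def by simp_all
  have "{t \<in> triples m. generating_triple t \<and> rotate_triple m j t = t} = {t \<in> UNIV \<times> R \<times> R. generating_triple t}"
    unfolding R_def rotation_fixed_sets_def triples_def by auto
  moreover have "(\<Sum>t \<in> UNIV \<times> R \<times> R. x ^ triple_weight t) =
      (\<Sum>t \<in> {t \<in> UNIV \<times> R \<times> R. generating_triple t}. x ^ triple_weight t) +
      (\<Sum>t \<in> {t \<in> UNIV \<times> R \<times> R. \<not> generating_triple t}. x ^ triple_weight t)"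
    using R(1) by (simp add: sum.Int_Diff[of "UNIV \<times> R \<times> R" _ "Collect generating_triple"] Int_def set_diff_eq)
  ultimately show ?thesis
    using sum_triple_weight_product[of x R] sum_triple_weight_non_generating[OF R, of x]
    unfolding F_def R_def by (simp add: algebra_simps)
qed

lemma sum_gcd_eq_sum_totient:
  fixes h :: "nat \<Rightarrow> real"
  assumes m: "0 < m"
  shows "(\<Sum>j<m. h (gcd j m)) = (\<Sum>d | d dvd m. real (totient (m div d)) * h d)"
proof -
  have "(\<Sum>j<m. h (gcd j m)) = (\<Sum>j \<in> {0<..m}. h (gcd j m))"
    by (rule sum.reindex_bij_witness[where i = "\<lambda>j. if j = m then 0 else j"
          and j = "\<lambda>j. if j = 0 then m else j"]) (use m in auto)
  also have "\<dots> = (\<Sum>d | d dvd m. \<Sum>j \<in> {j \<in> {0<..m}. gcd j m = d}. h (gcd j m))"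
    by (rule sum.group[symmetric]) (use m in auto)
  also have "\<dots> = (\<Sum>d | d dvd m. real (card {j \<in> {0<..m}. gcd j m = d}) * h d)"
    by (rule sum.cong) auto
  also have "\<dots> = (\<Sum>d | d dvd m. real (totient (m div d)) * h d)"
    by (rule sum.cong) (use m card_gcd_eq_totient in auto)
  finally show ?thesis .
qed

lemma sum_weighted_triple_orbits:
  fixes x :: real
  assumes m: "0 < m"
  shows "(\<Sum>k = 1..4 * m + 1. real (card (cyclic_action.orbit m (rotate_triple m) `
            {t \<in> triples m. generating_triple t \<and> triple_weight t = k})) * x ^ k)
       = (\<Sum>j<m. \<Sum>t \<in> {t \<in> triples m. generating_triple t \<and> rotate_triple m j t = t}. x ^ triple_weight t) / real m"
proof -
  interpret C: cyclic_action m "triples m" "rotate_triple m"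
    using cyclic_action_rotate_triple[OF m] .
  define Y where "Y = {t \<in> triples m. generating_triple t}"
  have Y: "Y \<subseteq> triples m" "finite Y"
    unfolding Y_def using finite_triples by auto
  have weight_class: "{t \<in> triples m. generating_triple t \<and> triple_weight t = k} = {t \<in> Y. triple_weight t = k}" for k
    unfolding Y_def by auto
  have closed: "C.orbit t \<subseteq> {t \<in> Y. triple_weight t = k}" if "t \<in> Y" "triple_weight t = k" for t k
  proof
    fix s assume "s \<in> C.orbit t"
    then obtain j where "s = rotate_triple m j t" unfolding C.orbit_def by auto
    then show "s \<in> {t \<in> Y. triple_weight t = k}"
      using that C.act_closed triple_weight_rotate_triple generating_triple_rotate_triple
      unfolding Y_def by auto
  qed
  have card_orbits: "real (card (C.orbit ` {t \<in> Y. triple_weight t = k})) =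
      (\<Sum>t \<in> {t \<in> Y. triple_weight t = k}. 1 / real (card (C.orbit t)))" for k
    by (rule C.card_orbits_eq_sum) (use Y closed in auto)
  have "(\<Sum>k = 1..4 * m + 1. real (card (C.orbit ` {t \<in> triples m. generating_triple t \<and> triple_weight t = k})) * x ^ k)
      = (\<Sum>k = 1..4 * m + 1. \<Sum>t \<in> {t \<in> Y. triple_weight t = k}. x ^ triple_weight t / real (card (C.orbit t)))"
    unfolding weight_class card_orbits sum_distrib_right by simp
  also have "\<dots> = (\<Sum>t \<in> Y. x ^ triple_weight t / real (card (C.orbit t)))"
    by (rule sum.group) (use Y triple_weight_bounds in \<open>auto simp: Y_def\<close>)
  also have "\<dots> = (\<Sum>j<m. \<Sum>t \<in> {t \<in> Y. rotate_triple m j t = t}. x ^ triple_weight t) / real m"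
    by (rule C.weighted_burnside[OF Y])
  also have "\<dots> = (\<Sum>j<m. \<Sum>t \<in> {t \<in> triples m. generating_triple t \<and> rotate_triple m j t = t}.
                        x ^ triple_weight t) / real m"
    unfolding Y_def by (simp add: conj_ac)
  finally show ?thesis .
qed

theorem triple_orbit_generating_function:
  fixes x :: real
  assumes m: "0 < m"
  shows "(\<Sum>k = 1..4 * m + 1. real (card (cyclic_action.orbit m (rotate_triple m) `
            {t \<in> triples m. generating_triple t \<and> triple_weight t = k})) * x ^ k)
       = (\<Sum>d | d dvd m. real (totient (m div d)) *
            ((1 + x) * ((1 + (x\<^sup>2) ^ (m div d)) ^ d)\<^sup>2 - (1 + (x\<^sup>2) ^ (m div d)) ^ d)) / real m - x"
proof -
  define F where "F d = (1 + (x\<^sup>2) ^ (m div d)) ^ d" for d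
  have "(\<Sum>t \<in> {t \<in> triples m. generating_triple t \<and> rotate_triple m j t = t}. x ^ triple_weight t)
      = (1 + x) * (F (gcd j m))\<^sup>2 - F (gcd j m) - x" for j
    using sum_fixed_generating_triples[of x m j] sum_rotation_fixed_sets[OF m, of "x\<^sup>2" j]
    by (simp add: F_def)
  then have "(\<Sum>j<m. \<Sum>t \<in> {t \<in> triples m. generating_triple t \<and> rotate_triple m j t = t}. x ^ triple_weight t)
      = (\<Sum>j<m. (1 + x) * (F (gcd j m))\<^sup>2 - F (gcd j m)) - m * x"
    by (simp add: sum_subtractf)
  also have "(\<Sum>j<m. (1 + x) * (F (gcd j m))\<^sup>2 - F (gcd j m)) =
      (\<Sum>d | d dvd m. real (totient (m div d)) * ((1 + x) * (F d)\<^sup>2 - F d))"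
    by (rule sum_gcd_eq_sum_totient[OF m])
  finally show ?thesis
    unfolding sum_weighted_triple_orbits[OF m] using m by (simp add: field_simps F_def)
qed

section \<open>The groups \<open>\<int>\<^sub>n\<close>\<close>

lemma cong_mod_double: "[(a::int) mod (2 * n) = a] (mod n)"
  unfolding cong_def by (simp add: mod_mod_cancel)

lemma even_mod_double_iff: "even ((a::int) mod (2 * n)) \<longleftrightarrow> even a"
  using dvd_mod_iff[of 2 "2 * n" a] by simp

lemma carrier_integer_mod_group_pos: "0 < n \<Longrightarrow> carrier (integer_mod_group n) = {0..<int n}"
  by (simp add: carrier_integer_mod_group)

lemma mult_mod_iso_integer_mod_group:
  assumes n: "0 < n" and u: "coprime u (int n)"
  shows "(\<lambda>x. (u * x) mod int n) \<in> iso (integer_mod_group n) (integer_mod_group n)"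
proof -
  let ?G = "integer_mod_group n" and ?f = "\<lambda>x. (u * x) mod int n"
  have into: "?f ` carrier ?G \<subseteq> carrier ?G"
    using n by (auto simp: carrier_integer_mod_group_pos)
  have "?f \<in> hom ?G ?G"
  proof (rule homI)
    show "?f x \<in> carrier ?G" if "x \<in> carrier ?G" for x
      using into that by blast
    show "?f (x \<otimes>\<^bsub>?G\<^esub> y) = ?f x \<otimes>\<^bsub>?G\<^esub> ?f y" for x y
      by (simp add: mod_mult_right_eq mod_add_eq distrib_left)
  qed
  moreover have inj: "inj_on ?f (carrier ?G)"
  proof (rule inj_onI)
    fix x y assume "x \<in> carrier ?G" "y \<in> carrier ?G" "?f x = ?f y"
    then show "x = y"
      using cong_mult_lcancel[OF u] n
      by (auto simp: cong_def carrier_integer_mod_group_pos intro: cong_less_imp_eq_int)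
  qed
  moreover have "?f ` carrier ?G = carrier ?G"
    using endo_inj_surj[OF _ into inj] n by (simp add: carrier_integer_mod_group_pos)
  ultimately show ?thesis
    by (simp add: iso_def bij_betw_def)
qed

lemma hom_integer_mod_group_eq_mult:
  assumes n: "1 < n" and hom: "\<alpha> \<in> hom (integer_mod_group n) (integer_mod_group n)"
    and x: "x \<in> carrier (integer_mod_group n)"
  shows "\<alpha> x = (\<alpha> 1 * x) mod int n"
proof -
  let ?G = "integer_mod_group n"
  have one: "1 \<in> carrier ?G"
    using n by simp
  have x': "0 \<le> x" "x < int n"
    using x n by (simp_all add: carrier_integer_mod_group_pos)
  have "\<alpha> x = \<alpha> ((int (nat x) * 1) mod int n)"
    using x' by simp
  also have "(int (nat x) * 1) mod int n = 1 [^]\<^bsub>?G\<^esub> nat x"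
    by simp
  also have "\<alpha> (1 [^]\<^bsub>?G\<^esub> nat x) = \<alpha> 1 [^]\<^bsub>?G\<^esub> nat x"
    by (rule hom_nat_pow[OF hom one]) simp_all
  finally show ?thesis
    using x' by (simp add: mult.commute)
qed

lemma iso_integer_mod_group_coprime:
  assumes n: "1 < n" and iso: "\<alpha> \<in> iso (integer_mod_group n) (integer_mod_group n)"
  shows "coprime (\<alpha> 1) (int n)"
proof -
  let ?G = "integer_mod_group n"
  have hom: "\<alpha> \<in> hom ?G ?G" and surj: "\<alpha> ` carrier ?G = carrier ?G"
    using iso by (auto simp: iso_def bij_betw_def)
  have "1 \<in> \<alpha> ` carrier ?G"
    using n by (subst surj) simp
  then obtain y where y: "1 = \<alpha> y" "y \<in> carrier ?G"
    by (rule imageE)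
  have "(\<alpha> 1 * y) mod int n = 1"
    using trans[OF y(1) hom_integer_mod_group_eq_mult[OF n hom y(2)]] by (rule sym)
  then have "[\<alpha> 1 * y = 1] (mod int n)"
    using n by (simp add: cong_def)
  then show ?thesis
    unfolding coprime_iff_invertible_int by blast
qed

lemma mult_mod_in_generate:
  assumes "w \<in> generate (integer_mod_group n) S"
  shows "(int k * w) mod int n \<in> generate (integer_mod_group n) S"
proof (induction k)
  case 0
  then show ?case using generate.one[of "integer_mod_group n" S] by simp
next
  case (Suc k)
  have "(int (Suc k) * w) mod int n = ((int k * w) mod int n) \<otimes>\<^bsub>integer_mod_group n\<^esub> w"
    by (simp add: mod_add_right_eq algebra_simps)
  then show ?case
    using generate.eng[OF Suc assms] by simp
qed

lemma gcd_multiple_in_generate: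
  assumes n: "0 < n" and y: "y \<in> generate (integer_mod_group n) S"
    and z: "z \<in> carrier (integer_mod_group n)" "gcd y (int n) dvd z"
  shows "z \<in> generate (integer_mod_group n) S"
proof -
  obtain s t where st: "s * y + t * int n = gcd y (int n)"
    using bezout_int by blast
  obtain w where w: "z = gcd y (int n) * w"
    using z(2) by (auto elim: dvdE)
  define k where "k = nat ((s * w) mod int n)"
  have "int k = (s * w) mod int n"
    unfolding k_def using n by simp
  then have "(int k * y) mod int n = (s * w * y) mod int n"
    by (simp add: mod_mult_left_eq)
  also have "s * w * y = z - (t * w) * int n"
    using st w by (simp add: algebra_simps flip: st)
  also have "(z - (t * w) * int n) mod int n = z mod int n"
    by (simp add: mod_eq_dvd_iff)
  also have "\<dots> = z"
    using z(1) n by (simp add: carrier_integer_mod_group_pos)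
  finally show ?thesis
    using mult_mod_in_generate[OF y, of k] by simp
qed

lemma even_subgroup_integer_mod_group:
  assumes "0 < n"
  shows "subgroup {x \<in> carrier (integer_mod_group (2 * n)). even x} (integer_mod_group (2 * n))"
proof (rule group.subgroupI[OF group_integer_mod_group])
  show "inv\<^bsub>integer_mod_group (2 * n)\<^esub> x \<in> {x \<in> carrier (integer_mod_group (2 * n)). even x}"
    "x \<otimes>\<^bsub>integer_mod_group (2 * n)\<^esub> y \<in> {x \<in> carrier (integer_mod_group (2 * n)). even x}"
    if "x \<in> {x \<in> carrier (integer_mod_group (2 * n)). even x}"
       "y \<in> {x \<in> carrier (integer_mod_group (2 * n)). even x}" for x y
    using that assms by (auto simp: carrier_integer_mod_group_pos even_mod_double_iff)
qed (use assms in \<open>auto intro!: exI[of _ 0]\<close>)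

lemma half_subgroup_integer_mod_group:
  assumes "0 < n"
  shows "subgroup {0, int n} (integer_mod_group (2 * n))"
proof (rule group.subgroupI[OF group_integer_mod_group])
  have "(- int n) mod (2 * int n) = (- int n + 2 * int n) mod (2 * int n)"
    by (simp only: mod_add_self2)
  also have "\<dots> = int n"
    using assms by simp
  finally have "(- int n) mod (2 * int n) = int n" .
  then show "inv\<^bsub>integer_mod_group (2 * n)\<^esub> x \<in> {0, int n}" if "x \<in> {0, int n}" for x
    using that assms by (auto simp: carrier_integer_mod_group_pos)
qed (use assms in \<open>auto simp: carrier_integer_mod_group_pos\<close>)

lemma inv_image_integer_mod_group:
  assumes n: "0 < n" and S: "S \<subseteq> carrier (integer_mod_group n)" "\<And>x. x \<in> S \<Longrightarrow> (- x) mod int n \<in> S"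
  shows "m_inv (integer_mod_group n) ` S = S"
proof (intro equalityI subsetI)
  fix y assume "y \<in> m_inv (integer_mod_group n) ` S"
  then obtain x where "x \<in> S" "y = (- x) mod int n"
    using S(1) by auto
  then show "y \<in> S"
    using S(2) by simp
next
  fix x assume x: "x \<in> S"
  then have "x = (- ((- x) mod int n)) mod int n"
    using S(1) n by (auto simp: carrier_integer_mod_group_pos mod_minus_eq)
  also have "\<dots> = m_inv (integer_mod_group n) ((- x) mod int n)"
    using n by (simp add: carrier_integer_mod_group_pos)
  finally show "x \<in> m_inv (integer_mod_group n) ` S"
    using S(2)[OF x] by blast
qed

section \<open>Discrete logarithms modulo an odd prime\<close>

lemma mod_eq_double_range_cases:
  fixes a b k :: nat
  assumes "a < 2 * k" "b < 2 * k" "a mod k = b mod k"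
  shows "a = b \<or> a = b + k \<or> b = a + k"
proof -
  have split: "x = x mod k \<or> x = x mod k + k" if "x < 2 * k" for x
    using that by (cases "x < k") (auto simp: le_mod_geq)
  show ?thesis
    using split[OF assms(1)] split[OF assms(2)] assms(3) by auto
qed

locale odd_prime_primroot =
  fixes p g :: nat
  assumes p_prime: "prime p" and p_odd: "odd p" and g_primroot: "residue_primroot p g"
begin

definition m :: nat where
  "m = (p - 1) div 2"

lemma p_ge_3: "3 \<le> p"
  using p_prime p_odd prime_ge_2_nat[OF p_prime] by (cases "p = 2") auto

lemma p_minus_1_eq: "p - 1 = 2 * m"
  unfolding m_def using p_odd p_ge_3 by (auto elim!: oddE)

lemma m_pos: "0 < m"
  using p_minus_1_eq p_ge_3 by simp

lemma prime_int: "prime (int p)"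
  using p_prime by simp

lemma p_gt_1: "1 < int p"
  using p_ge_3 by simp

lemma odd_int: "odd (int p)"
  using p_odd by simp

lemma coprime_unit: "\<not> int p dvd x \<Longrightarrow> coprime x (int p)"
  using prime_imp_coprime[OF prime_int, of x] by (simp add: coprime_commute)

definition dlog :: "int \<Rightarrow> nat" where
  "dlog y = (THE i. i < p - 1 \<and> [int g ^ i = y] (mod int p))"

lemma bij_betw_gpow: "bij_betw (\<lambda>i. g ^ i mod p) {..<p - 1} {0<..<p}"
  using residue_primroot_is_generator[of p g] g_primroot p_ge_3 p_prime
  by (simp add: totient_prime totatives_prime)

lemma not_dvd_gpow: "\<not> int p dvd int g ^ i"
proof
  assume "int p dvd int g ^ i"
  then have "int p dvd int g"
    by (rule prime_dvd_power[OF prime_int])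
  then have "p dvd g"
    by simp
  then show False
    using g_primroot p_ge_3 by (auto simp: residue_primroot_def dest: coprime_common_divisor)
qed

lemma gpow_cong_imp_eq:
  assumes "i < p - 1" "j < p - 1" "[int g ^ i = int g ^ j] (mod int p)"
  shows "i = j"
proof -
  have "[g ^ i = g ^ j] (mod p)"
    using assms(3) cong_int_iff[of "g ^ i" "g ^ j" p] by simp
  then have "g ^ i mod p = g ^ j mod p"
    by (simp add: cong_def)
  then show ?thesis
    using bij_betw_gpow assms(1,2) unfolding bij_betw_def inj_on_def by auto
qed

lemma exists_gpow_cong:
  assumes "\<not> int p dvd y"
  shows "\<exists>i < p - 1. [int g ^ i = y] (mod int p)"
proof -
  define r where "r = nat (y mod int p)"
  have y: "0 \<le> y mod int p" "y mod int p < int p" "y mod int p \<noteq> 0"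
    using assms p_gt_1 by (simp_all add: dvd_eq_mod_eq_0)
  then have "r \<in> {0<..<p}"
    unfolding r_def by auto
  then have "r \<in> (\<lambda>i. g ^ i mod p) ` {..<p - 1}"
    using bij_betw_gpow by (simp add: bij_betw_def)
  then obtain i where i: "i < p - 1" "g ^ i mod p = r"
    by auto
  then have "int (g ^ i mod p) = y mod int p"
    using y(1) unfolding r_def by simp
  then show ?thesis
    using i(1) by (auto simp: cong_def of_nat_mod)
qed

lemma dlog_eqI:
  assumes "i < p - 1" "[int g ^ i = y] (mod int p)"
  shows "dlog y = i"
  unfolding dlog_def
proof (rule the_equality)
  fix j assume "j < p - 1 \<and> [int g ^ j = y] (mod int p)"
  then show "j = i"
    using gpow_cong_imp_eq[of j i] cong_trans[OF _ cong_sym[OF assms(2)]] assms(1) by blast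
qed (use assms in simp)

lemma dlog:
  assumes "\<not> int p dvd y"
  shows "dlog y < p - 1" "[int g ^ dlog y = y] (mod int p)"
  using exists_gpow_cong[OF assms] dlog_eqI by auto

lemma dlog_cong:
  assumes "[y = y'] (mod int p)"
  shows "dlog y = dlog y'"
proof -
  have "[int g ^ i = y] (mod int p) \<longleftrightarrow> [int g ^ i = y'] (mod int p)" for i
    using assms by (meson cong_sym cong_trans)
  then show ?thesis
    unfolding dlog_def by simp
qed

lemma ord_g: "ord p g = p - 1"
  using g_primroot p_prime by (simp add: residue_primroot_def totient_prime)

lemma gpow_p_minus_1: "[int g ^ (p - 1) = 1] (mod int p)"
proof -
  have "[g ^ (p - 1) = 1] (mod p)"
    using ord_works[of g p] ord_g by simp
  then show ?thesis
    using cong_int_iff[of "g ^ (p - 1)" 1 p] by simp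
qed

lemma gpow_mod_cong: "[int g ^ (i mod (p - 1)) = int g ^ i] (mod int p)"
proof -
  have "int g ^ i = (int g ^ (p - 1)) ^ (i div (p - 1)) * int g ^ (i mod (p - 1))"
    by (metis div_mult_mod_eq power_add power_mult mult.commute)
  moreover have "[(int g ^ (p - 1)) ^ (i div (p - 1)) * int g ^ (i mod (p - 1))
                  = 1 ^ (i div (p - 1)) * int g ^ (i mod (p - 1))] (mod int p)"
    by (intro cong_mult cong_pow gpow_p_minus_1 cong_refl)
  ultimately show ?thesis
    by (simp add: cong_sym)
qed

lemma gpow_m: "[int g ^ m = - 1] (mod int p)"
proof -
  have "[int g ^ (2 * m) = 1] (mod int p)"
    using gpow_p_minus_1 p_minus_1_eq by simp
  then have "int p dvd (int g ^ m - 1) * (int g ^ m + 1)"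
    unfolding cong_iff_dvd_diff mult_2 power_add by (simp add: algebra_simps)
  then have "int p dvd int g ^ m - 1 \<or> int p dvd int g ^ m + 1"
    using prime_dvd_mult_iff[OF prime_int] by blast
  moreover have "\<not> int p dvd int g ^ m - 1"
  proof
    assume "int p dvd int g ^ m - 1"
    then have "[g ^ m = 1] (mod p)"
      using cong_int_iff[of "g ^ m" 1 p] by (simp add: cong_iff_dvd_diff)
    moreover have "0 < m" "m < ord p g"
      using m_pos p_minus_1_eq ord_g by auto
    ultimately show False
      using ord_works[of g p] by blast
  qed
  ultimately show ?thesis
    by (simp add: cong_iff_dvd_diff)
qed

lemma dlog_mult:
  assumes "\<not> int p dvd u" "\<not> int p dvd y"
  shows "dlog (u * y) = (dlog u + dlog y) mod (p - 1)"
proof (rule dlog_eqI)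
  show "(dlog u + dlog y) mod (p - 1) < p - 1"
    using p_ge_3 by simp
  show "[int g ^ ((dlog u + dlog y) mod (p - 1)) = u * y] (mod int p)"
  proof (rule cong_trans[OF gpow_mod_cong])
    show "[int g ^ (dlog u + dlog y) = u * y] (mod int p)"
      using cong_mult[OF dlog(2)[OF assms(1)] dlog(2)[OF assms(2)]] by (simp add: power_add)
  qed
qed

lemma dlog_uminus:
  assumes "\<not> int p dvd y"
  shows "dlog (- y) = (dlog y + m) mod (p - 1)"
proof (rule dlog_eqI)
  show "(dlog y + m) mod (p - 1) < p - 1"
    using p_ge_3 by simp
  show "[int g ^ ((dlog y + m) mod (p - 1)) = - y] (mod int p)"
  proof (rule cong_trans[OF gpow_mod_cong])
    show "[int g ^ (dlog y + m) = - y] (mod int p)"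
      using cong_mult[OF dlog(2)[OF assms] gpow_m] by (simp add: power_add)
  qed
qed

text \<open>\<open>hlog\<close> induces an isomorphism from \<open>(\<int>/p)\<^sup>* / {\<plusminus>1}\<close> onto \<open>\<int>/m\<close>.\<close>

definition hlog :: "int \<Rightarrow> nat" where
  "hlog y = dlog y mod m"

lemma hlog_less: "hlog y < m"
  unfolding hlog_def using m_pos by simp

lemma hlog_cong: "[y = y'] (mod int p) \<Longrightarrow> hlog y = hlog y'"
  unfolding hlog_def using dlog_cong by simp

lemma hlog_mult:
  assumes "\<not> int p dvd u" "\<not> int p dvd y"
  shows "hlog (u * y) = (hlog u + hlog y) mod m"
  unfolding hlog_def dlog_mult[OF assms] p_minus_1_eq by (simp add: mod_mod_cancel mod_add_eq)

lemma hlog_uminus: "\<not> int p dvd y \<Longrightarrow> hlog (- y) = hlog y"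
  unfolding hlog_def dlog_uminus p_minus_1_eq by (simp add: mod_mod_cancel)

lemma hlog_gpow: "a < m \<Longrightarrow> hlog (int g ^ a) = a"
  unfolding hlog_def using dlog_eqI[of a "int g ^ a"] p_minus_1_eq by simp

lemma hlog_eq_imp_cong_pm:
  assumes "\<not> int p dvd y" "\<not> int p dvd y'" "hlog y = hlog y'"
  shows "[y = y'] (mod int p) \<or> [y = - y'] (mod int p)"
proof -
  have "dlog y < 2 * m" "dlog y' < 2 * m"
    using dlog(1) assms p_minus_1_eq by metis+
  then have "dlog y = dlog y' \<or> dlog y = dlog y' + m \<or> dlog y' = dlog y + m"
    using assms(3) unfolding hlog_def by (rule mod_eq_double_range_cases)
  then show ?thesis
  proof (elim disjE)
    assume "dlog y = dlog y'"
    then have "[y = int g ^ dlog y'] (mod int p)"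
      using cong_sym[OF dlog(2)[OF assms(1)]] by simp
    then have "[y = y'] (mod int p)"
      using dlog(2)[OF assms(2)] by (rule cong_trans)
    then show ?thesis ..
  next
    assume "dlog y = dlog y' + m"
    then have "[int g ^ dlog y = y' * - 1] (mod int p)"
      using cong_mult[OF dlog(2)[OF assms(2)] gpow_m] by (simp add: power_add)
    then show ?thesis
      using cong_trans[OF cong_sym[OF dlog(2)[OF assms(1)]]] by simp
  next
    assume "dlog y' = dlog y + m"
    then have "[int g ^ dlog y' = y * - 1] (mod int p)"
      using cong_mult[OF dlog(2)[OF assms(1)] gpow_m] by (simp add: power_add)
    then have "[y' = - y] (mod int p)"
      using cong_trans[OF cong_sym[OF dlog(2)[OF assms(2)]]] by simp
    then have "[- y' = y] (mod int p)"
      using cong_minus_minus_iff by fastforce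
    then show ?thesis
      by (simp add: cong_sym)
  qed
qed

section \<open>Inverse-closed subsets of \<open>\<int>\<^sub>2\<^sub>p\<close>\<close>

abbreviation G :: "int monoid" where
  "G \<equiv> integer_mod_group (2 * p)"

lemma carrier_G: "carrier G = {0..<2 * int p}"
  using p_ge_3 by (simp add: carrier_integer_mod_group)

lemma cong_double_iff:
  "[x = y] (mod 2 * int p) \<longleftrightarrow> [x = y] (mod int p) \<and> (even x \<longleftrightarrow> even y)"
proof
  assume cong: "[x = y] (mod 2 * int p)"
  have "[x = y] (mod int p)" "[x = y] (mod 2)"
    by (rule cong_dvd_modulus[OF cong], simp)+
  then show "[x = y] (mod int p) \<and> (even x \<longleftrightarrow> even y)"
    using cong_dvd_iff by blast
next
  assume "[x = y] (mod int p) \<and> (even x \<longleftrightarrow> even y)"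
  moreover have "coprime 2 (int p)"
    using odd_int by simp
  moreover have "[x = y] (mod 2)" if "even x \<longleftrightarrow> even y"
    using that by (simp add: cong_iff_dvd_diff)
  ultimately show "[x = y] (mod 2 * int p)"
    using coprime_cong_mult by blast
qed

lemma exists_parity_rep:
  assumes "\<not> int p dvd y"
  obtains x where "0 \<le> x" "x < 2 * int p" "\<not> int p dvd x" "even x \<longleftrightarrow> ev" "[x = y] (mod int p)"
proof -
  define r where "r = y mod int p"
  have r: "0 \<le> r" "r < int p" "\<not> int p dvd r" "[r = y] (mod int p)"
    using assms p_gt_1 unfolding r_def by (auto simp: cong_def dvd_eq_mod_eq_0)
  show ?thesis
  proof (cases "even r \<longleftrightarrow> ev")
    case True
    then show ?thesis using that r by simp
  next
    case False
    then have "even (r + int p) \<longleftrightarrow> ev"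
      using odd_int by auto
    moreover have "[r + int p = y] (mod int p)" "\<not> int p dvd r + int p"
      using r by (auto simp: cong_def)
    ultimately show ?thesis
      using that[of "r + int p"] r by simp
  qed
qed

lemma exists_hlog_rep:
  assumes "a < m"
  obtains x where "0 \<le> x" "x < 2 * int p" "\<not> int p dvd x" "even x \<longleftrightarrow> ev" "hlog x = a"
proof -
  obtain x where x: "0 \<le> x" "x < 2 * int p" "\<not> int p dvd x" "even x \<longleftrightarrow> ev" "[x = int g ^ a] (mod int p)"
    using exists_parity_rep[OF not_dvd_gpow] by metis
  have "hlog x = a"
    using hlog_cong[OF x(5)] hlog_gpow[OF assms] by simp
  then show ?thesis
    using that x by blast
qed

lemma bij_betw_dlog: "bij_betw dlog {1..<int p} {..<p - 1}"
proof (rule bij_betw_imageI)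
  show "inj_on dlog {1..<int p}"
  proof (rule inj_onI)
    fix y y' assume y: "y \<in> {1..<int p}" "y' \<in> {1..<int p}" and eq: "dlog y = dlog y'"
    have units: "\<not> int p dvd y" "\<not> int p dvd y'"
      using y zdvd_not_zless[of y "int p"] zdvd_not_zless[of y' "int p"] by auto
    have "[y = int g ^ dlog y'] (mod int p)" "[int g ^ dlog y' = y'] (mod int p)"
      using cong_sym[OF dlog(2)[OF units(1)]] eq dlog(2)[OF units(2)] by simp_all
    then have "[y = y'] (mod int p)"
      by (rule cong_trans)
    then show "y = y'"
      using y by (auto intro: cong_less_imp_eq_int)
  qed
  show "dlog ` {1..<int p} = {..<p - 1}"
  proof (intro equalityI subsetI)
    fix i assume "i \<in> dlog ` {1..<int p}"
    then obtain y where "i = dlog y" "0 < y" "y < int p"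
      by auto
    then show "i \<in> {..<p - 1}"
      using dlog(1) zdvd_not_zless[of y "int p"] by auto
  next
    fix i assume i: "i \<in> {..<p - 1}"
    define y where "y = int g ^ i mod int p"
    have "dlog y = i"
      using i by (intro dlog_eqI) (auto simp: y_def cong_def)
    moreover have "0 \<le> y" "y < int p" "y \<noteq> 0"
      using not_dvd_gpow[of i] p_gt_1 by (simp_all add: y_def dvd_eq_mod_eq_0)
    then have "y \<in> {1..<int p}"
      by simp
    ultimately show "i \<in> dlog ` {1..<int p}"
      by (auto intro!: image_eqI[of _ _ y])
  qed
qed

lemma card_hlog_preimage:
  assumes "A \<subseteq> {..<m}"
  shows "card {y \<in> {1..<int p}. hlog y \<in> A} = 2 * card A"
proof -
  have inj: "inj_on dlog {1..<int p}" and image: "dlog ` {1..<int p} = {..<2 * m}"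
    using bij_betw_dlog p_minus_1_eq by (simp_all add: bij_betw_def)
  have "dlog ` {y \<in> {1..<int p}. hlog y \<in> A} = {i \<in> {..<2 * m}. i mod m \<in> A}"
  proof (intro equalityI subsetI)
    fix i assume "i \<in> dlog ` {y \<in> {1..<int p}. hlog y \<in> A}"
    then obtain y where y: "y \<in> {1..<int p}" "hlog y \<in> A" "i = dlog y"
      by blast
    then have "i \<in> {..<2 * m}"
      using image by blast
    then show "i \<in> {i \<in> {..<2 * m}. i mod m \<in> A}"
      using y unfolding hlog_def by simp
  next
    fix i assume i: "i \<in> {i \<in> {..<2 * m}. i mod m \<in> A}"
    then have "i \<in> dlog ` {1..<int p}"
      using image by simp
    then obtain y where "y \<in> {1..<int p}" "i = dlog y"
      by blast
    then show "i \<in> dlog ` {y \<in> {1..<int p}. hlog y \<in> A}"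
      using i unfolding hlog_def by blast
  qed
  moreover have "inj_on dlog {y \<in> {1..<int p}. hlog y \<in> A}"
    using inj by (rule inj_on_subset) blast
  then have "card (dlog ` {y \<in> {1..<int p}. hlog y \<in> A}) = card {y \<in> {1..<int p}. hlog y \<in> A}"
    by (rule card_image)
  ultimately have "card {y \<in> {1..<int p}. hlog y \<in> A} = card {i \<in> {..<2 * m}. i mod m \<in> A}"
    by simp
  also have "\<dots> = 2 * card A"
    using card_periodic_extension[of m "2 * m" A] m_pos assms by simp
  finally show ?thesis .
qed

definition unit_class_set :: "bool \<Rightarrow> nat set \<Rightarrow> int set" where
  "unit_class_set ev A = {x \<in> {0..<2 * int p}. \<not> int p dvd x \<and> (even x \<longleftrightarrow> ev) \<and> hlog x \<in> A}"

lemma inj_on_mod_unit_class_set: "inj_on (\<lambda>x. x mod int p) (unit_class_set ev A)"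
proof (rule inj_onI)
  fix x x' assume x: "x \<in> unit_class_set ev A" "x' \<in> unit_class_set ev A"
    and eq: "x mod int p = x' mod int p"
  have "[x = x'] (mod int p)"
    using eq by (simp add: cong_def)
  with x have "[x = x'] (mod 2 * int p)"
    by (simp add: cong_double_iff unit_class_set_def)
  then show "x = x'"
    using x cong_less_imp_eq_int[of x "2 * int p" x'] by (simp add: unit_class_set_def)
qed

lemma image_mod_unit_class_set: "(\<lambda>x. x mod int p) ` unit_class_set ev A = {y \<in> {1..<int p}. hlog y \<in> A}"
proof (intro equalityI subsetI)
  fix y assume "y \<in> (\<lambda>x. x mod int p) ` unit_class_set ev A"
  then obtain x where x: "x \<in> unit_class_set ev A" "y = x mod int p"
    by auto
  then have "hlog y = hlog x"
    by (intro hlog_cong) (simp add: cong_def)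
  moreover have "0 \<le> y" "y < int p"
    using x(2) p_gt_1 by simp_all
  moreover have "y \<noteq> 0"
    using x by (simp add: unit_class_set_def dvd_eq_mod_eq_0)
  ultimately have "y \<in> {1..<int p}"
    by simp
  moreover have "hlog y \<in> A"
    using x(1) \<open>hlog y = hlog x\<close> by (simp add: unit_class_set_def)
  ultimately show "y \<in> {y \<in> {1..<int p}. hlog y \<in> A}"
    by simp
next
  fix y assume y: "y \<in> {y \<in> {1..<int p}. hlog y \<in> A}"
  then have "\<not> int p dvd y"
    using zdvd_not_zless[of y "int p"] by auto
  then obtain x where x: "0 \<le> x" "x < 2 * int p" "\<not> int p dvd x" "even x \<longleftrightarrow> ev"
    "[x = y] (mod int p)"
    by (rule exists_parity_rep)
  have "x mod int p = y"
    using x(5) y by (simp add: cong_def)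
  moreover have "hlog x \<in> A"
    using hlog_cong[OF x(5)] y by simp
  moreover have "x \<in> unit_class_set ev A"
    using x \<open>hlog x \<in> A\<close> by (simp add: unit_class_set_def)
  ultimately show "y \<in> (\<lambda>x. x mod int p) ` unit_class_set ev A"
    by blast
qed

lemma card_unit_class_set:
  assumes "A \<subseteq> {..<m}"
  shows "card (unit_class_set ev A) = 2 * card A"
proof -
  have "card (unit_class_set ev A) = card ((\<lambda>x. x mod int p) ` unit_class_set ev A)"
    by (rule card_image[OF inj_on_mod_unit_class_set, symmetric])
  then show ?thesis
    using image_mod_unit_class_set card_hlog_preimage[OF assms] by simp
qed

fun cayley_set :: "triple \<Rightarrow> int set" where
  "cayley_set (e, A, B) = {x \<in> {0..<2 * int p}. x = int p \<and> e \<or>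
                               \<not> int p dvd x \<and> hlog x \<in> (if even x then A else B)}"

lemma cayley_set_eq_Un:
  "cayley_set (e, A, B) = (if e then {int p} else {}) \<union> unit_class_set True A \<union> unit_class_set False B"
  using p_gt_1 by (auto simp: unit_class_set_def)

lemma card_cayley_set:
  assumes "t \<in> triples m"
  shows "card (cayley_set t) = triple_weight t"
proof -
  obtain e A B where t: "t = (e, A, B)" "A \<subseteq> {..<m}" "B \<subseteq> {..<m}"
    using assms by (cases t) (auto simp: triples_def)
  have fin: "finite (unit_class_set ev X)" for ev X
    unfolding unit_class_set_def by (rule finite_subset[of _ "{0..<2 * int p}"]) auto
  have disj: "((if e then {int p} else {}) \<union> unit_class_set True A) \<inter> unit_class_set False B = {}"
    "(if e then {int p} else {}) \<inter> unit_class_set True A = {}"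
    by (auto simp: unit_class_set_def)
  have "card (cayley_set t) = card ((if e then {int p} else {}) \<union> unit_class_set True A) + card (unit_class_set False B)"
    unfolding t(1) cayley_set_eq_Un by (rule card_Un_disjoint[OF _ fin disj(1)]) (simp add: fin)
  also have "card ((if e then {int p} else {}) \<union> unit_class_set True A) = of_bool e + card (unit_class_set True A)"
    by (subst card_Un_disjoint[OF _ fin disj(2)]) auto
  finally show ?thesis
    using card_unit_class_set t by simp
qed

lemma coprime_double_iff: "coprime u (2 * int p) \<longleftrightarrow> odd u \<and> \<not> int p dvd u"
proof
  assume "coprime u (2 * int p)"
  then have "coprime u 2" "coprime u (int p)"
    by simp_all
  then show "odd u \<and> \<not> int p dvd u"
    using coprime_common_divisor[of u "int p" "int p"] p_gt_1 by auto
qed (simp add: coprime_unit)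

lemma unit_eq_or_neg:
  assumes "x \<in> carrier G" "x' \<in> carrier G" "\<not> int p dvd x" "\<not> int p dvd x'"
    and "even x \<longleftrightarrow> even x'" "hlog x = hlog x'"
  shows "x = x' \<or> x = (- x') mod (2 * int p)"
proof -
  define y where "y = (- x') mod (2 * int p)"
  have y: "[y = - x'] (mod int p)" "even y \<longleftrightarrow> even x'"
    unfolding y_def by (simp_all add: cong_mod_double even_mod_double_iff)
  have range: "0 \<le> x" "x < 2 * int p" "0 \<le> y" "y < 2 * int p"
    using assms(1) p_gt_1 by (auto simp: carrier_G y_def)
  from hlog_eq_imp_cong_pm[OF assms(3,4,6)]
  have "[x = x'] (mod 2 * int p) \<or> [x = y] (mod 2 * int p)"
  proof
    assume "[x = x'] (mod int p)"
    then show ?thesis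
      using assms(5) by (simp add: cong_double_iff)
  next
    assume "[x = - x'] (mod int p)"
    then have "[x = y] (mod int p)"
      using cong_trans[OF _ cong_sym[OF y(1)]] by blast
    then show ?thesis
      using assms(5) y(2) by (simp add: cong_double_iff)
  qed
  then show ?thesis
    using range assms(2) cong_less_imp_eq_int unfolding carrier_G y_def[symmetric] by auto
qed

lemma cayley_set_subset: "cayley_set t \<subseteq> carrier G"
  by (cases t) (auto simp: cayley_set.simps carrier_G)

lemma zero_notin_cayley_set: "0 \<notin> cayley_set t"
  by (cases t) (auto simp: cayley_set.simps)

lemma finite_cayley_set: "finite (cayley_set t)"
  using cayley_set_subset by (rule finite_subset) (simp add: carrier_G)

lemma uminus_mod_mem_cayley_set:
  assumes "x \<in> cayley_set t"
  shows "(- x) mod (2 * int p) \<in> cayley_set t"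
proof -
  obtain e A B where t: "t = (e, A, B)"
    by (cases t)
  define x' where "x' = (- x) mod (2 * int p)"
  have "0 \<le> x'" "x' < 2 * int p" "even x' \<longleftrightarrow> even x" "[x' = - x] (mod int p)"
    unfolding x'_def using p_gt_1 by (auto simp: even_mod_double_iff cong_mod_double)
  moreover have "x' = int p" if "x = int p"
  proof -
    have "x' = (- int p + 2 * int p) mod (2 * int p)"
      unfolding x'_def that by (simp only: mod_add_self2)
    then show ?thesis
      using p_gt_1 by simp
  qed
  moreover have "\<not> int p dvd x' \<and> hlog x' = hlog x" if "\<not> int p dvd x"
  proof
    show "\<not> int p dvd x'"
      using cong_dvd_iff[OF \<open>[x' = - x] (mod int p)\<close>] that by simp
    show "hlog x' = hlog x"
      using hlog_cong[OF \<open>[x' = - x] (mod int p)\<close>] hlog_uminus[OF that] by simp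
  qed
  ultimately show ?thesis
    using assms unfolding t x'_def[symmetric] cayley_set.simps by auto
qed

lemma inv_cayley_set: "m_inv G ` cayley_set t = cayley_set t"
  using inv_image_integer_mod_group[of "2 * p" "cayley_set t"] cayley_set_subset uminus_mod_mem_cayley_set
    p_ge_3 by simp

definition triple_of :: "int set \<Rightarrow> triple" where
  "triple_of S = (int p \<in> S, hlog ` {x \<in> S. \<not> int p dvd x \<and> even x}, hlog ` {x \<in> S. \<not> int p dvd x \<and> odd x})"

lemma triple_of_in_triples: "triple_of S \<in> triples m"
  unfolding triple_of_def triples_def using hlog_less by auto

lemma triple_of_cayley_set:
  assumes "t \<in> triples m"
  shows "triple_of (cayley_set t) = t"
proof -
  obtain e A B where t: "t = (e, A, B)" "A \<subseteq> {..<m}" "B \<subseteq> {..<m}"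
    using assms by (cases t) (auto simp: triples_def)
  have "hlog ` {x \<in> cayley_set t. \<not> int p dvd x \<and> (even x \<longleftrightarrow> ev)} = (if ev then A else B)" for ev
  proof (intro equalityI subsetI)
    fix a assume "a \<in> hlog ` {x \<in> cayley_set t. \<not> int p dvd x \<and> (even x \<longleftrightarrow> ev)}"
    then show "a \<in> (if ev then A else B)"
      unfolding t cayley_set.simps by auto
  next
    fix a assume a: "a \<in> (if ev then A else B)"
    then have "a < m"
      using t by (auto split: if_splits)
    then obtain x where "0 \<le> x" "x < 2 * int p" "\<not> int p dvd x" "even x \<longleftrightarrow> ev" "hlog x = a"
      by (rule exists_hlog_rep)
    then show "a \<in> hlog ` {x \<in> cayley_set t. \<not> int p dvd x \<and> (even x \<longleftrightarrow> ev)}"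
      using a unfolding t cayley_set.simps by (auto intro!: image_eqI[of _ _ x] split: if_splits)
  qed
  from this[of True] this[of False] show ?thesis
    unfolding triple_of_def t using p_gt_1 by (simp add: cayley_set.simps)
qed

lemma cayley_set_triple_of:
  assumes S: "S \<subseteq> carrier G" "0 \<notin> S" "\<And>x. x \<in> S \<Longrightarrow> (- x) mod (2 * int p) \<in> S"
  shows "cayley_set (triple_of S) = S"
proof (intro equalityI subsetI)
  fix x assume x: "x \<in> S"
  then have "0 < x" "x < 2 * int p"
    using S(1,2) by (auto simp: carrier_G order_le_less)
  moreover have "x = int p" if "int p dvd x"
    using that \<open>0 < x\<close> \<open>x < 2 * int p\<close> by (auto elim!: dvdE simp: zero_less_mult_iff)
  ultimately show "x \<in> cayley_set (triple_of S)"
    using x unfolding triple_of_def cayley_set.simps by auto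
next
  fix x assume x: "x \<in> cayley_set (triple_of S)"
  then have "x \<in> carrier G"
    using cayley_set_subset by blast
  show "x \<in> S"
  proof (cases "int p dvd x")
    case True
    then show ?thesis
      using x unfolding triple_of_def cayley_set.simps by auto
  next
    case False
    then obtain x' where x': "x' \<in> S" "\<not> int p dvd x'" "even x' \<longleftrightarrow> even x" "hlog x = hlog x'"
      using x unfolding triple_of_def cayley_set.simps by (auto split: if_splits)
    then have "x = x' \<or> x = (- x') mod (2 * int p)"
      using unit_eq_or_neg[OF \<open>x \<in> carrier G\<close> _ False] S(1) by blast
    then show ?thesis
      using x' S(3) by auto
  qed
qed

lemma generate_eq_carrier_if_odd_unit:
  assumes S: "S \<subseteq> carrier G" and y: "y \<in> generate G S" "odd y" "\<not> int p dvd y"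
  shows "generate G S = carrier G"
proof
  show "generate G S \<subseteq> carrier G"
    using group.generate_incl[OF group_integer_mod_group S] .
  have "coprime y (2 * int p)"
    unfolding coprime_double_iff using y(2,3) by simp
  then have "gcd y (2 * int p) = 1"
    by (simp only: coprime_iff_gcd_eq_1)
  then show "carrier G \<subseteq> generate G S"
    using gcd_multiple_in_generate[of "2 * p" y S] y(1) p_ge_3 by (simp add: subset_iff)
qed

lemma even_in_generate_if_unit:
  assumes y: "y \<in> generate G S" "\<not> int p dvd y" and z: "z \<in> carrier G" "even z"
  shows "z \<in> generate G S"
proof -
  have "\<not> int p dvd gcd y (2 * int p)"
  proof
    assume "int p dvd gcd y (2 * int p)"
    then have "int p dvd y"
      using gcd_dvd1 by (rule dvd_trans)
    with y(2) show False ..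
  qed
  then have "coprime (gcd y (2 * int p)) (int p)"
    by (rule coprime_unit)
  moreover have "gcd y (2 * int p) dvd 2 * int p"
    by (rule gcd_dvd2)
  ultimately have "gcd y (2 * int p) dvd 2"
    using coprime_dvd_mult_left_iff by blast
  moreover have "2 dvd z"
    using z(2) .
  ultimately have "gcd y (2 * int p) dvd z"
    by (rule dvd_trans)
  then show ?thesis
    using gcd_multiple_in_generate[of "2 * p" y S z] y(1) z(1) p_ge_3 by simp
qed

lemma generate_eq_carrier_if_even_unit:
  assumes S: "S \<subseteq> carrier G" and y: "y \<in> generate G S" "\<not> int p dvd y"
    and p: "int p \<in> generate G S"
  shows "generate G S = carrier G"
proof
  show "generate G S \<subseteq> carrier G"
    using group.generate_incl[OF group_integer_mod_group S] .
  show "carrier G \<subseteq> generate G S"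
  proof
    fix z assume z: "z \<in> carrier G"
    show "z \<in> generate G S"
    proof (cases "even z")
      case True
      then show ?thesis
        using even_in_generate_if_unit[OF y z] by blast
    next
      case False
      define w where "w = (z + int p) mod (2 * int p)"
      have "w \<in> carrier G" "even w"
        using False odd_int p_gt_1 by (simp_all add: w_def carrier_G even_mod_double_iff)
      then have "w \<otimes>\<^bsub>G\<^esub> int p \<in> generate G S"
        using generate.eng[OF even_in_generate_if_unit[OF y] p] by blast
      moreover have "w \<otimes>\<^bsub>G\<^esub> int p = (z + int p + int p) mod (2 * int p)"
        unfolding w_def by (simp add: mod_add_left_eq)
      moreover have "(z + int p + int p) mod (2 * int p) = z"
      proof -
        have "0 \<le> z" "z < 2 * int p"
          using z by (simp_all add: carrier_G)
        then show ?thesis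
          by (simp add: algebra_simps)
      qed
      ultimately show ?thesis
        by simp
    qed
  qed
qed

text \<open>A non-generating set lies in the subgroup of even elements or in \<open>{0, p}\<close>.\<close>

lemma generating_triple_if_generate_eq_carrier:
  assumes t: "t \<in> triples m" and gen: "generate G (cayley_set t) = carrier G"
  shows "generating_triple t"
proof -
  have "1 \<in> carrier G"
    using p_gt_1 by (simp add: carrier_G)
  then have proper: "\<not> cayley_set t \<subseteq> H" if "subgroup H G" "1 \<notin> H" for H
    using group.generate_subgroup_incl[OF group_integer_mod_group _ that(1)] gen that(2) by blast
  have "\<not> cayley_set t \<subseteq> {x \<in> carrier G. even x}"
    using proper even_subgroup_integer_mod_group[of p] p_ge_3 by simp
  moreover have "\<not> cayley_set t \<subseteq> {0, int p}"
    using proper half_subgroup_integer_mod_group[of p] p_ge_3 p_gt_1 by simp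
  ultimately show ?thesis
    using cayley_set_subset[of t] by (cases t) (auto split: if_splits)
qed

lemma generate_cayley_set_eq_carrier_iff:
  assumes "t \<in> triples m"
  shows "generate G (cayley_set t) = carrier G \<longleftrightarrow> generating_triple t"
proof
  show "generating_triple t" if "generate G (cayley_set t) = carrier G"
    using generating_triple_if_generate_eq_carrier[OF assms that] .
next
  obtain e A B where t: "t = (e, A, B)" "A \<subseteq> {..<m}" "B \<subseteq> {..<m}"
    using assms by (cases t) (auto simp: triples_def)
  assume "generating_triple t"
  then consider b where "b \<in> B" | a where "e" "a \<in> A"
    unfolding t by auto
  then show "generate G (cayley_set t) = carrier G"
  proof cases
    case (1 b)
    then obtain x where x: "0 \<le> x" "x < 2 * int p" "\<not> int p dvd x" "odd x" "hlog x = b"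
      using exists_hlog_rep[of b False] t(3) by blast
    then have "x \<in> cayley_set t"
      using 1 unfolding t by simp
    then show ?thesis
      using generate_eq_carrier_if_odd_unit[OF cayley_set_subset generate.incl] x(3,4) by blast
  next
    case (2 a)
    then obtain y where y: "0 \<le> y" "y < 2 * int p" "\<not> int p dvd y" "even y" "hlog y = a"
      using exists_hlog_rep[of a True] t(2) by blast
    then have "y \<in> cayley_set t" "int p \<in> cayley_set t"
      using 2 p_gt_1 unfolding t by auto
    then have "y \<in> generate G (cayley_set t)" "int p \<in> generate G (cayley_set t)"
      by (auto intro: generate.incl)
    then show ?thesis
      using generate_eq_carrier_if_even_unit[OF cayley_set_subset _ y(3)] by blast
  qed
qed

lemma mult_mem_cayley_set:
  assumes u: "odd u" "\<not> int p dvd u" and x: "x \<in> cayley_set t"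
  shows "(u * x) mod (2 * int p) \<in> cayley_set (rotate_triple m (hlog u) t)"
proof -
  obtain e A B where t: "t = (e, A, B)"
    by (cases t)
  define y where "y = (u * x) mod (2 * int p)"
  have range: "0 \<le> y" "y < 2 * int p"
    unfolding y_def using p_gt_1 by simp_all
  have cong: "[y = u * x] (mod int p)"
    unfolding y_def by (rule cong_mod_double)
  have parity: "even y \<longleftrightarrow> even x"
    unfolding y_def using u(1) by (simp add: even_mod_double_iff)
  show ?thesis
    unfolding y_def[symmetric]
  proof (cases "x = int p")
    case True
    obtain k where "u = 2 * k + 1"
      using u(1) by (auto elim: oddE)
    then have "u * int p = int p + k * (2 * int p)"
      by (simp add: algebra_simps)
    then have "y = int p"
      using True p_gt_1 unfolding y_def by simp
    then show "y \<in> cayley_set (rotate_triple m (hlog u) t)"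
      using x True unfolding t by simp
  next
    case False
    then have unit: "\<not> int p dvd x" "hlog x \<in> (if even x then A else B)"
      using x unfolding t by auto
    then have "\<not> int p dvd y"
      using cong_dvd_iff[OF cong] prime_dvd_mult_iff[OF prime_int] u(2) by simp
    moreover have "hlog y = (hlog x + hlog u) mod m"
      using hlog_cong[OF cong] hlog_mult[OF u(2) unit(1)] by (simp add: add.commute)
    ultimately show "y \<in> cayley_set (rotate_triple m (hlog u) t)"
      using range parity unit mem_rotate_set[of "hlog x" _ "hlog u" m] unfolding t
      by (auto split: if_splits)
  qed
qed

lemma mult_image_cayley_set:
  assumes u: "coprime u (2 * int p)" and t: "t \<in> triples m"
  shows "(\<lambda>x. (u * x) mod (2 * int p)) ` cayley_set t = cayley_set (rotate_triple m (hlog u) t)"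
proof (rule card_subset_eq[OF finite_cayley_set])
  show "(\<lambda>x. (u * x) mod (2 * int p)) ` cayley_set t \<subseteq> cayley_set (rotate_triple m (hlog u) t)"
    using mult_mem_cayley_set u unfolding coprime_double_iff by blast
  have "inj_on (\<lambda>x. (u * x) mod (2 * int p)) (carrier G)"
    using mult_mod_iso_integer_mod_group[of "2 * p" u] u p_ge_3 by (simp add: iso_def bij_betw_def)
  then have "card ((\<lambda>x. (u * x) mod (2 * int p)) ` cayley_set t) = card (cayley_set t)"
    using cayley_set_subset by (intro card_image) (rule inj_on_subset)
  also have "\<dots> = card (cayley_set (rotate_triple m (hlog u) t))"
    using t cyclic_action.act_closed[OF cyclic_action_rotate_triple[OF m_pos] t]
    by (simp add: card_cayley_set triple_weight_rotate_triple)
  finally show "card ((\<lambda>x. (u * x) mod (2 * int p)) ` cayley_set t) = card (cayley_set (rotate_triple m (hlog u) t))" .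
qed

lemma aut_image_cayley_set:
  assumes \<alpha>: "\<alpha> \<in> iso G G" and t: "t \<in> triples m"
  shows "\<alpha> ` cayley_set t = cayley_set (rotate_triple m (hlog (\<alpha> 1)) t)"
proof -
  have "1 < 2 * p"
    using p_ge_3 by simp
  have hom: "\<alpha> \<in> hom G G"
    using \<alpha> by (simp add: iso_def)
  have "\<alpha> x = (\<alpha> 1 * x) mod (2 * int p)" if "x \<in> cayley_set t" for x
  proof -
    have "x \<in> carrier G"
      using cayley_set_subset that by blast
    then show ?thesis
      using hom_integer_mod_group_eq_mult[OF \<open>1 < 2 * p\<close> hom, of x] by simp
  qed
  then have "\<alpha> ` cayley_set t = (\<lambda>x. (\<alpha> 1 * x) mod (2 * int p)) ` cayley_set t"
    by (rule image_cong[OF refl])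
  also have "\<dots> = cayley_set (rotate_triple m (hlog (\<alpha> 1)) t)"
    using mult_image_cayley_set[OF _ t] iso_integer_mod_group_coprime[OF \<open>1 < 2 * p\<close> \<alpha>] by simp
  finally show ?thesis .
qed

lemma aut_orbit_cayley_set:
  assumes t: "t \<in> triples m"
  shows "aut_orbit G (cayley_set t) = cayley_set ` cyclic_action.orbit m (rotate_triple m) t"
proof -
  interpret C: cyclic_action m "triples m" "rotate_triple m"
    using cyclic_action_rotate_triple[OF m_pos] .
  show ?thesis
  proof (intro equalityI subsetI)
    fix S assume "S \<in> aut_orbit G (cayley_set t)"
    then obtain \<alpha> where \<alpha>: "\<alpha> \<in> iso G G" "S = \<alpha> ` cayley_set t"
      unfolding aut_orbit_def by auto
    moreover have "rotate_triple m (hlog (\<alpha> 1)) t \<in> C.orbit t"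
      unfolding C.orbit_def using hlog_less by blast
    ultimately show "S \<in> cayley_set ` C.orbit t"
      using aut_image_cayley_set[OF _ t] by blast
  next
    fix S assume "S \<in> cayley_set ` C.orbit t"
    then obtain j where j: "j < m" "S = cayley_set (rotate_triple m j t)"
      unfolding C.orbit_def by auto
    obtain u where u: "0 \<le> u" "u < 2 * int p" "\<not> int p dvd u" "odd u" "hlog u = j"
      using exists_hlog_rep[OF j(1), of False] by blast
    then have "coprime u (2 * int p)"
      unfolding coprime_double_iff by simp
    then have "S = (\<lambda>x. (u * x) mod int (2 * p)) ` cayley_set t"
      "(\<lambda>x. (u * x) mod int (2 * p)) \<in> iso G G"
      using mult_image_cayley_set[OF _ t] mult_mod_iso_integer_mod_group[of "2 * p" u] p_ge_3 j(2) u(5)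
      by simp_all
    then show "S \<in> aut_orbit G (cayley_set t)"
      unfolding aut_orbit_def by blast
  qed
qed

lemma cayley_sets_of_card:
  "{\<Omega> \<in> cayley_sets G. card \<Omega> = k} = cayley_set ` {t \<in> triples m. generating_triple t \<and> triple_weight t = k}"
proof (intro equalityI subsetI)
  fix S assume "S \<in> {\<Omega> \<in> cayley_sets G. card \<Omega> = k}"
  then have S: "S \<subseteq> carrier G" "m_inv G ` S = S" "generate G S = carrier G" "0 \<notin> S" "card S = k"
    unfolding cayley_sets_def by auto
  have "(- x) mod (2 * int p) \<in> S" if "x \<in> S" for x
  proof -
    have "m_inv G x \<in> S"
      using S(2) that by blast
    moreover have "m_inv G x = (- x) mod (2 * int p)"
      using S(1) that by auto
    ultimately show ?thesis
      by simp
  qed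
  then have S_eq: "cayley_set (triple_of S) = S"
    using cayley_set_triple_of S(1,4) by blast
  moreover have "generating_triple (triple_of S)"
    using generate_cayley_set_eq_carrier_iff[OF triple_of_in_triples[of S]] S(3) S_eq by simp
  moreover have "triple_weight (triple_of S) = k"
    using card_cayley_set[OF triple_of_in_triples[of S]] S(5) S_eq by simp
  ultimately show "S \<in> cayley_set ` {t \<in> triples m. generating_triple t \<and> triple_weight t = k}"
    using triple_of_in_triples by (auto intro!: image_eqI[of _ _ "triple_of S"])
next
  fix S assume "S \<in> cayley_set ` {t \<in> triples m. generating_triple t \<and> triple_weight t = k}"
  then obtain t where t: "t \<in> triples m" "generating_triple t" "triple_weight t = k" and S: "S = cayley_set t"
    by auto
  have "S \<subseteq> carrier G" "m_inv G ` S = S" "0 \<notin> S"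
    unfolding S by (rule cayley_set_subset inv_cayley_set zero_notin_cayley_set)+
  moreover have "generate G S = carrier G" "card S = k"
    unfolding S using generate_cayley_set_eq_carrier_iff[OF t(1)] card_cayley_set[OF t(1)] t(2,3) by simp_all
  ultimately show "S \<in> {\<Omega> \<in> cayley_sets G. card \<Omega> = k}"
    unfolding cayley_sets_def by simp
qed

theorem a_w_eq_card_orbits:
  "a_w G k = card (cyclic_action.orbit m (rotate_triple m) ` {t \<in> triples m. generating_triple t \<and> triple_weight t = k})"
proof -
  interpret C: cyclic_action m "triples m" "rotate_triple m"
    using cyclic_action_rotate_triple[OF m_pos] .
  define Y where "Y = {t \<in> triples m. generating_triple t \<and> triple_weight t = k}"
  have "a_w G k = card (aut_orbit G ` cayley_set ` Y)"
    unfolding a_w_def cayley_sets_of_card Y_def ..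
  also have "aut_orbit G ` cayley_set ` Y = image cayley_set ` C.orbit ` Y"
    unfolding image_image by (rule image_cong[OF refl], rule aut_orbit_cayley_set) (simp add: Y_def)
  also have "card \<dots> = card (C.orbit ` Y)"
  proof (rule card_image, rule inj_on_image)
    have "inj_on cayley_set (triples m)"
      by (rule inj_on_inverseI[where g = triple_of]) (rule triple_of_cayley_set)
    then show "inj_on cayley_set (\<Union> (C.orbit ` Y))"
      by (rule inj_on_subset) (use C.orbit_subset in \<open>auto simp: Y_def\<close>)
  qed
  finally show ?thesis
    unfolding Y_def .
qed

theorem Psi_w_integer_mod_group:
  fixes x :: real
  shows "Psi_w G x = 2 / (real p - 1) *
           (\<Sum>d \<in> {d. d dvd (p - 1) div 2}.
              real (totient ((p - 1) div (2 * d))) * (1 + x ^ ((p - 1) div d)) ^ d *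
              ((1 + x ^ ((p - 1) div d)) ^ d * (1 + x) - 1)) - x"
proof -
  define F where "F d = (1 + (x\<^sup>2) ^ (m div d)) ^ d" for d
  have real_p: "real p - 1 = 2 * real m"
    using p_minus_1_eq p_ge_3 by (simp add: of_nat_diff)
  have "card (carrier G) - 1 = 4 * m + 1"
    using p_minus_1_eq p_ge_3 by (simp add: carrier_G)
  then have "Psi_w G x = (\<Sum>k = 1..4 * m + 1. real (card (cyclic_action.orbit m (rotate_triple m) `
                 {t \<in> triples m. generating_triple t \<and> triple_weight t = k})) * x ^ k)"
    unfolding Psi_w_def a_w_eq_card_orbits by simp
  also have "\<dots> = (\<Sum>d | d dvd m. real (totient (m div d)) * ((1 + x) * (F d)\<^sup>2 - F d)) / real m - x"
    unfolding F_def by (rule triple_orbit_generating_function[OF m_pos])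
  also have "(\<Sum>d | d dvd m. real (totient (m div d)) * ((1 + x) * (F d)\<^sup>2 - F d)) =
      (\<Sum>d \<in> {d. d dvd (p - 1) div 2}.
         real (totient ((p - 1) div (2 * d))) * (1 + x ^ ((p - 1) div d)) ^ d *
         ((1 + x ^ ((p - 1) div d)) ^ d * (1 + x) - 1))"
  proof (rule sum.cong)
    fix d assume "d \<in> {d. d dvd (p - 1) div 2}"
    then have "(p - 1) div (2 * d) = m div d" "x ^ ((p - 1) div d) = (x\<^sup>2) ^ (m div d)"
      using p_minus_1_eq by (auto simp: div_mult2_eq div_mult_swap power_mult)
    then show "real (totient (m div d)) * ((1 + x) * (F d)\<^sup>2 - F d) =
        real (totient ((p - 1) div (2 * d))) * (1 + x ^ ((p - 1) div d)) ^ d *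
        ((1 + x ^ ((p - 1) div d)) ^ d * (1 + x) - 1)"
      by (simp add: F_def algebra_simps power2_eq_square)
  qed (simp add: m_def)
  finally show ?thesis
    unfolding real_p using m_pos by simp
qed

end

theorem corollary5p2:
  fixes p :: nat
  assumes "prime p" and "odd p"
  shows "(\<forall>x::real. Psi_w (integer_mod_group (2 * p)) x =
            2 / (real p - 1) *
              (\<Sum>d \<in> {d. d dvd (p - 1) div 2}.
                 real (totient ((p - 1) div (2 * d))) *
                 (1 + x ^ ((p - 1) div d)) ^ d *
                 ((1 + x ^ ((p - 1) div d)) ^ d * (1 + x) - 1))
            - x)
       \<and> E_w (integer_mod_group (2 * p)) = Psi_w (integer_mod_group (2 * p)) 1
       \<and> E_w (integer_mod_group (2 * p)) =
            - 1 + 2 / (real p - 1) *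
              (\<Sum>d \<in> {d. d dvd (p - 1) div 2}.
                 real (totient ((p - 1) div (2 * d))) * 2 ^ d * (2 ^ (d + 1) - 1))"
proof -
  obtain g where "residue_primroot p g"
    using prime_primitive_root_exists[OF prime_gt_1_nat[OF assms(1)] assms(1)] by blast
  then interpret odd_prime_primroot p g
    using assms by unfold_locales
  have "E_w G = Psi_w G 1"
    unfolding E_w_def ..
  moreover have "Psi_w G 1 = - 1 + 2 / (real p - 1) *
      (\<Sum>d \<in> {d. d dvd (p - 1) div 2}. real (totient ((p - 1) div (2 * d))) * 2 ^ d * (2 ^ (d + 1) - 1))"
    unfolding Psi_w_integer_mod_group by (simp add: algebra_simps)
  ultimately show ?thesis
    using Psi_w_integer_mod_group by simp
qed

end
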